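(* There is no integral quadruple $(a,b,c,d)$ with $c>b>a\ge2$ and $d\ge3$ satisfying \[\frac{1}{a}+\frac{1}{b}+\frac{1}{c}+\frac{d+1}{2d}=2+\frac{1}{abcd}.\] *)

theory Defs
  imports Complex_Main
begin

end

theory Submission
  imports Defs
begin

text \<open>The left-hand side is at most \<open>1/2 + 1/3 + 1/4 + 2/3 = 7/4\<close>, whereas the right-hand
  side exceeds \<open>2\<close> because \<open>abcd > 0\<close>.\<close>

lemma unit_fractions_sum_le_seven_quarters:
  fixes a b c d :: real
  assumes "2 \<le> a" "3 \<le> b" "4 \<le> c" "3 \<le> d"
  shows "1 / a + 1 / b + 1 / c + (d + 1) / (2 * d) \<le> 7 / 4"
proof -
  have "1 / a \<le> 1 / 2" "1 / b \<le> 1 / 3" "1 / c \<le> 1 / 4"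
    using assms by (simp_all add: field_simps)
  moreover have "(d + 1) / (2 * d) \<le> 2 / 3"
    using assms(4) by (simp add: field_simps)
  ultimately show ?thesis by linarith
qed

theorem proposition3p2:
  shows "\<not> (\<exists>a b c d :: int. 2 \<le> a \<and> a < b \<and> b < c \<and> 3 \<le> d \<and>
     1 / real_of_int a + 1 / real_of_int b + 1 / real_of_int c
       + (real_of_int d + 1) / (2 * real_of_int d)
     = 2 + 1 / real_of_int (a * b * c * d))"
proof
  assume "\<exists>a b c d :: int. 2 \<le> a \<and> a < b \<and> b < c \<and> 3 \<le> d \<and>
     1 / real_of_int a + 1 / real_of_int b + 1 / real_of_int c
       + (real_of_int d + 1) / (2 * real_of_int d)
     = 2 + 1 / real_of_int (a * b * c * d)"
  then obtain a b c d :: int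
    where bounds: "2 \<le> a" "a < b" "b < c" "3 \<le> d"
      and eq: "1 / real_of_int a + 1 / real_of_int b + 1 / real_of_int c
        + (real_of_int d + 1) / (2 * real_of_int d) = 2 + 1 / real_of_int (a * b * c * d)"
    by blast
  have "1 / real_of_int a + 1 / real_of_int b + 1 / real_of_int c
      + (real_of_int d + 1) / (2 * real_of_int d) \<le> 7 / 4"
    using bounds by (intro unit_fractions_sum_le_seven_quarters) linarith+
  moreover have "0 < 1 / real_of_int (a * b * c * d)"
    using bounds by (simp add: zero_less_mult_iff)
  ultimately show False
    using eq by linarith
qed

end
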